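(* Let $(X,S)$ be an association scheme of order $n>1$ and let $H$ be an $n\times n$ Hadamard matrix whose rows and columns are indexed by the elements of $X$. Then $(\widetilde{X}, S(H))$ is an association scheme, where $\widetilde X$ and $S(H)$ are as defined in the context.
   Context: An association scheme $(X,S)$ consists of a non-empty finite set $X$ and a partition $S$ of $X\times X$ such that: $1_X:=\{(\alpha,\alpha)\mid \alpha\in X\}\in S$; for each $s\in S$, $s^*:=\{(\alpha,\beta)\mid(\beta,\alpha)\in s\}\in S$; and for all $s,t,u\in S$ the number $|\alpha s\cap \beta t^*|$ is constant for $(\alpha,\beta)\in u$, where $\alpha s:=\{\beta\mid(\alpha,\beta)\in s\}$. Its order is $|X|$. $\mathbb{F}_2$ is the field with two elements, and $x_{ab}$ denotes the element $(x,a,b)$ of $X\times\mathbb{F}_2\times\mathbb{F}_2$. For a matrix $H$ indexed by $X$, let $H^{T(0)}=H$ and $H^{T(1)}=H^T$ (transpose), and let $\delta_{ac}=1$ if $a=c$ and $0$ otherwise. Define $\widetilde X=\{x_{ab}\mid x\in X,\ a,b\in\mathbb{F}_2\}$; $\widetilde t=\{(x_{ab},x_{a(b+1)})\mid x\in X,\ a,b\in\mathbb{F}_2\}$; for $s\in S\setminus\{1_X\}$, $\widetilde s=\{(x_{ab},y_{ac})\mid (x,y)\in s,\ a,b,c\in\mathbb{F}_2\}$; $r^1_H=\{(x_{ab},y_{cd})\mid x,y\in X,\ a,b,c,d\in\mathbb{F}_2,\ (1-\delta_{ac})(H^{T(a)})_{xy}=(-1)^{b+d}\}$; $r^{-1}_H=\{(x_{ab},y_{cd})\mid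 x,y\in X,\ a,b,c,d\in\mathbb{F}_2,\ a\ne c\}\setminus r^1_H$; $S(H)=\{1_{\widetilde X},\widetilde t\}\cup\{\widetilde s\mid s\in S\setminus\{1_X\}\}\cup\{r^1_H,r^{-1}_H\}$. *)

theory Defs
  imports Complex_Main "HOL-Library.Z2"
begin

definition assoc_scheme :: "'a set \<Rightarrow> ('a \<times> 'a) set set \<Rightarrow> bool" where
  "assoc_scheme X S \<longleftrightarrow>
     finite X \<and> X \<noteq> {} \<and>
     (\<forall>s\<in>S. s \<noteq> {}) \<and>
     (\<forall>s\<in>S. \<forall>u\<in>S. s \<noteq> u \<longrightarrow> s \<inter> u = {}) \<and>
     \<Union>S = X \<times> X \<and>
     Id_on X \<in> S \<and>
     (\<forall>s\<in>S. converse s \<in> S) \<and>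
     (\<forall>s\<in>S. \<forall>t\<in>S. \<forall>u\<in>S. \<exists>c::nat. \<forall>(\<alpha>,\<beta>)\<in>u.
        card ({\<gamma>. (\<alpha>,\<gamma>) \<in> s} \<inter> {\<gamma>. (\<beta>,\<gamma>) \<in> converse t}) = c)"

definition hadamard :: "'a set \<Rightarrow> ('a \<Rightarrow> 'a \<Rightarrow> real) \<Rightarrow> bool" where
  "hadamard X H \<longleftrightarrow>
     (\<forall>x\<in>X. \<forall>y\<in>X. H x y = 1 \<or> H x y = -1) \<and>
     (\<forall>x\<in>X. \<forall>y\<in>X. (\<Sum>z\<in>X. H x z * H y z) = (if x = y then real (card X) else 0))"

definition HT :: "('a \<Rightarrow> 'a \<Rightarrow> real) \<Rightarrow> bit \<Rightarrow> 'a \<Rightarrow> 'a \<Rightarrow> real" where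
  "HT H a x y = (if a = 0 then H x y else H y x)"

definition kdelta :: "bit \<Rightarrow> bit \<Rightarrow> real" where
  "kdelta a c = (if a = c then 1 else 0)"

definition sgnpow :: "bit \<Rightarrow> real" where
  "sgnpow b = (if b = 0 then 1 else -1)"

text \<open>x_{ab} is represented as (x, a, b).\<close>
definition Xt :: "'a set \<Rightarrow> ('a \<times> bit \<times> bit) set" where
  "Xt X = {(x, a, b) | x a b. x \<in> X}"

definition t_rel :: "'a set \<Rightarrow> (('a \<times> bit \<times> bit) \<times> ('a \<times> bit \<times> bit)) set" where
  "t_rel X = {((x, a, b), (x, a, b + 1)) | x a b. x \<in> X}"

definition s_tilde :: "('a \<times> 'a) set \<Rightarrow> (('a \<times> bit \<times> bit) \<times> ('a \<times> bit \<times> bit)) set" where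
  "s_tilde s = {((x, a, b), (y, a, c)) | x y a b c. (x, y) \<in> s}"

definition r1 :: "'a set \<Rightarrow> ('a \<Rightarrow> 'a \<Rightarrow> real) \<Rightarrow> (('a \<times> bit \<times> bit) \<times> ('a \<times> bit \<times> bit)) set" where
  "r1 X H = {((x, a, b), (y, c, d)) | x y a b c d. x \<in> X \<and> y \<in> X \<and>
              (1 - kdelta a c) * HT H a x y = sgnpow (b + d)}"

definition rm1 :: "'a set \<Rightarrow> ('a \<Rightarrow> 'a \<Rightarrow> real) \<Rightarrow> (('a \<times> bit \<times> bit) \<times> ('a \<times> bit \<times> bit)) set" where
  "rm1 X H = {((x, a, b), (y, c, d)) | x y a b c d. x \<in> X \<and> y \<in> X \<and> a \<noteq> c} - r1 X H"

definition SH :: "'a set \<Rightarrow> ('a \<times> 'a) set set \<Rightarrow> ('a \<Rightarrow> 'a \<Rightarrow> real)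
                   \<Rightarrow> (('a \<times> bit \<times> bit) \<times> ('a \<times> bit \<times> bit)) set set" where
  "SH X S H = {Id_on (Xt X), t_rel X} \<union> s_tilde ` (S - {Id_on X}) \<union> {r1 X H, rm1 X H}"

end

theory Submission
  imports Defs
begin

text \<open>
  The substance is the constancy of the intersection numbers, phrased via
  $npaths\ s\ t\ \alpha\ \beta$, the number of $\gamma$ with $(\alpha,\gamma) \in s$ and
  $(\gamma,\beta) \in t$:
  \<^item> for the "base" classes $1$, $r^1_H$ and $\widetilde s$ each path count is computed
    explicitly; it reduces to an intersection number or a valency of $(X,S)$, or to the number
    of columns in which two rows of $H^{T(a)}$ agree, which is $n/2$ for distinct rows because
    $H^T$ is again a Hadamard matrix;
  \<^item> the classes $t$ and $r^{-1}_H$ are the base classes $1$ and $r^1_H$ with one sign bit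
    toggled, and toggling permutes the classes, so their path counts reduce to the base case.
\<close>

declare add_bit_eq_xor[simp del]

lemma bit_cases: "(b::bit) = 0 \<or> b = 1"
  by (metis bit_not_zero_iff)

lemma bit_plus_one_eq_iff [simp]: "((d::bit) = b + 1) \<longleftrightarrow> d \<noteq> b" "(b + 1 = d) \<longleftrightarrow> d \<noteq> b"
  using bit_cases[of b] bit_cases[of d] by auto

lemma bit_add_self [simp]: "(b::bit) + b = 0"
  using bit_cases[of b] by auto

lemma bit_add_neq: "(b::bit) \<noteq> f \<Longrightarrow> b + f = 1"
  using bit_cases[of b] bit_cases[of f] by auto

lemma sgnpow_add: "sgnpow (b + d) = sgnpow b * sgnpow d"
  using bit_cases[of b] bit_cases[of d] by (auto simp: sgnpow_def)

lemma sgnpow_plus_one [simp]: "sgnpow (b + 1) = - sgnpow b"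
  by (simp add: sgnpow_add sgnpow_def)

lemma sgnpow_0_1 [simp]: "sgnpow 0 = 1" "sgnpow 1 = -1"
  by (simp_all add: sgnpow_def)

lemma sgnpow_add_plus_one [simp]:
  "sgnpow (b + 1 + d) = - sgnpow (b + d)" "sgnpow (b + (d + 1)) = - sgnpow (b + d)"
  by (simp_all add: sgnpow_add)

lemma sgnpow_cases: "sgnpow b = 1 \<or> sgnpow b = -1"
  by (simp add: sgnpow_def)

lemma sgnpow_neq [simp]: "sgnpow b \<noteq> 0" "sgnpow b \<noteq> - sgnpow b" "- sgnpow b \<noteq> sgnpow b"
  by (auto simp: sgnpow_def)

text \<open>Given the end point, the sign bit of a middle point of an $r^1_H$-step is determined.\<close>
lemma sgnpow_solve: "v = 1 \<or> v = -1 \<Longrightarrow> v = sgnpow (d + f) \<longleftrightarrow> d = (if v = sgnpow f then 0 else 1)"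
  using bit_cases[of d] bit_cases[of f] by (auto simp: sgnpow_add sgnpow_def)

text \<open>Two $r^1_H$-steps $x_{ab} \to y_{ed} \to z_{cf}$ exist iff $a = c \neq e$ and
  $H^{T(a)}_{xy} H^{T(a)}_{zy} = (-1)^{b+f}$; then $d$ is determined.\<close>
lemma sgnpow_two_steps:
  "v = 1 \<or> v = -1 \<Longrightarrow> w = 1 \<or> w = -1 \<Longrightarrow>
   (v = sgnpow (b + d) \<and> w = sgnpow (d + f)) \<longleftrightarrow> (d = (if v = sgnpow b then 0 else 1) \<and> v * w = sgnpow (b + f))"
  using bit_cases[of b] bit_cases[of d] bit_cases[of f] by (elim disjE) (auto simp: sgnpow_def)

lemma UNIV_bit: "(UNIV :: bit set) = {0, 1}"
  using bit_cases by auto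

lemma card_bit: "card (UNIV :: bit set) = 2"
  by (simp add: UNIV_bit)

lemma hadamard_entry_sq:
  assumes "hadamard X H" "x \<in> X" "y \<in> X"
  shows "H x y * H x y = 1"
  using assms unfolding hadamard_def by (metis mult_minus_left mult_1_left minus_minus)

definition column_gram :: "'a set \<Rightarrow> ('a \<Rightarrow> 'a \<Rightarrow> real) \<Rightarrow> 'a \<Rightarrow> 'a \<Rightarrow> real" where
  "column_gram X H y z = (\<Sum>x\<in>X. H x y * H x z)"

text \<open>$\mathrm{tr}((H^T H)^2) = \mathrm{tr}((H H^T)^2) = n^3$ for a Hadamard matrix of order $n$.\<close>
lemma column_gram_square_sum:
  assumes hd: "hadamard X H" and fin: "finite X"
  shows "(\<Sum>y\<in>X. \<Sum>z\<in>X. column_gram X H y z * column_gram X H y z) = real (card X) ^ 3"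
proof -
  define n where "n = real (card X)"
  have rows: "(\<Sum>y\<in>X. H x y * H w y) = (if x = w then n else 0)" if "x \<in> X" "w \<in> X" for x w
    using hd that unfolding hadamard_def n_def by auto
  have "(\<Sum>y\<in>X. \<Sum>z\<in>X. column_gram X H y z * column_gram X H y z)
      = (\<Sum>y\<in>X. \<Sum>z\<in>X. \<Sum>x\<in>X. \<Sum>w\<in>X. (H x y * H w y) * (H x z * H w z))"
    unfolding column_gram_def by (simp add: sum_product algebra_simps)
  also have "\<dots> = (\<Sum>y\<in>X. \<Sum>x\<in>X. \<Sum>z\<in>X. \<Sum>w\<in>X. (H x y * H w y) * (H x z * H w z))"
    by (intro sum.cong refl sum.swap)
  also have "\<dots> = (\<Sum>y\<in>X. \<Sum>x\<in>X. \<Sum>w\<in>X. \<Sum>z\<in>X. (H x y * H w y) * (H x z * H w z))"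
    by (intro sum.cong refl sum.swap)
  also have "\<dots> = (\<Sum>x\<in>X. \<Sum>y\<in>X. \<Sum>w\<in>X. \<Sum>z\<in>X. (H x y * H w y) * (H x z * H w z))"
    by (rule sum.swap)
  also have "\<dots> = (\<Sum>x\<in>X. \<Sum>w\<in>X. \<Sum>y\<in>X. \<Sum>z\<in>X. (H x y * H w y) * (H x z * H w z))"
    by (intro sum.cong refl sum.swap)
  also have "\<dots> = (\<Sum>x\<in>X. \<Sum>w\<in>X. (\<Sum>y\<in>X. H x y * H w y) * (\<Sum>z\<in>X. H x z * H w z))"
    by (simp add: sum_product)
  also have "\<dots> = (\<Sum>x\<in>X. \<Sum>w\<in>X. (if x = w then n * n else 0))"
    by (intro sum.cong refl) (simp add: rows)
  also have "\<dots> = n ^ 3"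
    using fin by (simp add: n_def power3_eq_cube)
  finally show ?thesis
    unfolding n_def .
qed

lemma column_gram_trace:
  assumes hd: "hadamard X H" and fin: "finite X"
  shows "(\<Sum>y\<in>X. column_gram X H y y) = real (card X) ^ 2"
  unfolding column_gram_def using hadamard_entry_sq[OF hd] fin
  by (subst sum.swap) (simp add: power2_eq_square)

text \<open>Row orthogonality of a Hadamard matrix forces column orthogonality: with
  $G = H^T H$ the two previous lemmas give $\sum_{y,z} (G_{yz} - n\delta_{yz})^2 = 0$.\<close>
lemma hadamard_transpose:
  assumes hd: "hadamard X H" and fin: "finite X"
  shows "hadamard X (\<lambda>x y. H y x)"
proof -
  define n where "n = real (card X)"
  define G where "G = column_gram X H"
  have expand: "(G y z - (if y = z then n else 0))\<^sup>2
      = G y z * G y z - 2 * (if y = z then n * G y z else 0) + (if y = z then n * n else 0)" for y z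
    by (simp add: power2_eq_square algebra_simps)
  have "(\<Sum>y\<in>X. \<Sum>z\<in>X. (G y z - (if y = z then n else 0))\<^sup>2)
      = (\<Sum>y\<in>X. (\<Sum>z\<in>X. G y z * G y z) - 2 * (n * G y y) + n * n)"
    unfolding expand
    by (intro sum.cong refl, simp only: sum.distrib sum_subtractf sum_distrib_left[symmetric])
      (simp add: fin)
  also have "\<dots> = (\<Sum>y\<in>X. \<Sum>z\<in>X. G y z * G y z) - 2 * n * (\<Sum>y\<in>X. G y y) + n * n * n"
    using fin by (simp add: sum.distrib sum_subtractf sum_distrib_left n_def algebra_simps)
  also have "\<dots> = 0"
    using column_gram_square_sum[OF hd fin] column_gram_trace[OF hd fin]
    by (simp add: G_def n_def power2_eq_square power3_eq_cube)
  finally have zero: "(\<Sum>y\<in>X. \<Sum>z\<in>X. (G y z - (if y = z then n else 0))\<^sup>2) = 0" .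
  have "G y z = (if y = z then n else 0)" if "y \<in> X" "z \<in> X" for y z
  proof -
    have "(\<Sum>z\<in>X. (G y z - (if y = z then n else 0))\<^sup>2) = 0"
      using zero fin that by (subst (asm) sum_nonneg_eq_0_iff) (auto intro: sum_nonneg)
    then have "(G y z - (if y = z then n else 0))\<^sup>2 = 0"
      using fin that by (subst (asm) sum_nonneg_eq_0_iff) auto
    then show ?thesis by simp
  qed
  then show ?thesis
    using hd unfolding hadamard_def G_def column_gram_def n_def by auto
qed

lemma hadamard_HT:
  assumes "hadamard X H" "finite X"
  shows "hadamard X (HT H a)"
proof -
  have "HT H a = H \<or> HT H a = (\<lambda>x y. H y x)"
    by (auto simp: HT_def fun_eq_iff)
  then show ?thesis
    using assms hadamard_transpose by metis
qed

text \<open>Two distinct rows of a Hadamard matrix agree in exactly half of the columns: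
  their entrywise product is a $\pm 1$ vector with sum $0$.\<close>
lemma hadamard_rows_balanced:
  assumes hd: "hadamard X H" and fin: "finite X"
    and x: "x \<in> X" and z: "z \<in> X" and "x \<noteq> z" and e: "e = 1 \<or> e = -1"
  shows "card {y\<in>X. H x y * H z y = e} = card X div 2"
proof -
  define P where "P = {y\<in>X. H x y * H z y = 1}"
  define M where "M = {y\<in>X. H x y * H z y = -1}"
  have "H x y * H z y = 1 \<or> H x y * H z y = -1" if "y \<in> X" for y
  proof -
    have "H x y = 1 \<or> H x y = -1" "H z y = 1 \<or> H z y = -1"
      using hd x z that unfolding hadamard_def by blast+
    then show ?thesis by auto
  qed
  then have X_split: "X = P \<union> M"
    unfolding P_def M_def by auto
  have disj: "P \<inter> M = {}"
    unfolding P_def M_def by auto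
  have fin_PM: "finite P" "finite M"
    using fin unfolding P_def M_def by auto
  have "0 = (\<Sum>y\<in>X. H x y * H z y)"
    using hd x z \<open>x \<noteq> z\<close> unfolding hadamard_def by simp
  also have "\<dots> = (\<Sum>y\<in>P. H x y * H z y) + (\<Sum>y\<in>M. H x y * H z y)"
    unfolding X_split using fin_PM disj by (rule sum.union_disjoint)
  also have "\<dots> = real (card P) - real (card M)"
    unfolding P_def M_def by simp
  finally have "card P = card M"
    by simp
  moreover have "card X = card P + card M"
    unfolding X_split using fin_PM disj by (simp add: card_Un_disjoint)
  ultimately show ?thesis
    using e unfolding P_def M_def by auto
qed

definition npaths :: "('b \<times> 'b) set \<Rightarrow> ('b \<times> 'b) set \<Rightarrow> 'b \<Rightarrow> 'b \<Rightarrow> nat" where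
  "npaths s t \<alpha> \<beta> = card {\<gamma>. (\<alpha>, \<gamma>) \<in> s \<and> (\<gamma>, \<beta>) \<in> t}"

definition constant_paths :: "('b \<times> 'b) set set \<Rightarrow> ('b \<times> 'b) set \<Rightarrow> ('b \<times> 'b) set \<Rightarrow> bool" where
  "constant_paths U s t \<longleftrightarrow> (\<forall>u\<in>U. \<exists>c. \<forall>(\<alpha>, \<beta>)\<in>u. npaths s t \<alpha> \<beta> = c)"

lemma assoc_scheme_iff:
  "assoc_scheme X S \<longleftrightarrow>
     finite X \<and> X \<noteq> {} \<and> (\<forall>s\<in>S. s \<noteq> {}) \<and> (\<forall>s\<in>S. \<forall>u\<in>S. s \<noteq> u \<longrightarrow> s \<inter> u = {}) \<and>
     \<Union>S = X \<times> X \<and> Id_on X \<in> S \<and> (\<forall>s\<in>S. converse s \<in> S) \<and>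
     (\<forall>s\<in>S. \<forall>t\<in>S. constant_paths S s t)"
proof -
  have paths: "{\<gamma>. (\<alpha>, \<gamma>) \<in> s} \<inter> {\<gamma>. (\<beta>, \<gamma>) \<in> converse t} = {\<gamma>. (\<alpha>, \<gamma>) \<in> s \<and> (\<gamma>, \<beta>) \<in> t}"
    for \<alpha> \<beta> :: 'a and s t
    by auto
  show ?thesis
    unfolding assoc_scheme_def constant_paths_def npaths_def paths ..
qed

text \<open>Introduction rule for relations on triples $x_{ab}$, avoiding nested pair patterns.\<close>
lemma constant_paths_tripleI:
  assumes "\<And>u. u \<in> U \<Longrightarrow> \<exists>c. \<forall>x a b z c' f. ((x, a, b), (z, c', f)) \<in> u \<longrightarrow> npaths s t (x, a, b) (z, c', f) = c"
  shows "constant_paths U s t"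
  unfolding constant_paths_def
proof
  fix u assume "u \<in> U"
  then obtain c where c: "\<forall>x a b z c' f. ((x, a, b), (z, c', f)) \<in> u \<longrightarrow> npaths s t (x, a, b) (z, c', f) = c"
    using assms by blast
  show "\<exists>c. \<forall>(\<alpha>, \<beta>)\<in>u. npaths s t \<alpha> \<beta> = c"
  proof (intro exI[of _ c] ballI)
    fix p assume "p \<in> u"
    moreover obtain x a b z c' f where "p = ((x, a, b), (z, c', f))"
      by (metis prod_cases3 surj_pair)
    ultimately show "case p of (\<alpha>, \<beta>) \<Rightarrow> npaths s t \<alpha> \<beta> = c"
      using c by simp
  qed
qed

text \<open>Paths through the identity relation: there is at most one, so in a partition of
  $A \times A$ the identity class has constant path counts with every class.\<close>
lemma npaths_Id_left: "npaths (Id_on A) t \<alpha> \<beta> = (if \<alpha> \<in> A \<and> (\<alpha>, \<beta>) \<in> t then 1 else 0)"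
proof -
  have "{\<gamma>. (\<alpha>, \<gamma>) \<in> Id_on A \<and> (\<gamma>, \<beta>) \<in> t} = (if \<alpha> \<in> A \<and> (\<alpha>, \<beta>) \<in> t then {\<alpha>} else {})"
    by auto
  then show ?thesis unfolding npaths_def by simp
qed

lemma npaths_Id_right: "npaths s (Id_on A) \<alpha> \<beta> = (if \<beta> \<in> A \<and> (\<alpha>, \<beta>) \<in> s then 1 else 0)"
proof -
  have "{\<gamma>. (\<alpha>, \<gamma>) \<in> s \<and> (\<gamma>, \<beta>) \<in> Id_on A} = (if \<beta> \<in> A \<and> (\<alpha>, \<beta>) \<in> s then {\<beta>} else {})"
    by auto
  then show ?thesis unfolding npaths_def by simp
qed

lemma constant_paths_Id_left:
  assumes "t \<in> U" and "\<Union>U \<subseteq> A \<times> A" and "\<forall>u\<in>U. \<forall>v\<in>U. u \<noteq> v \<longrightarrow> u \<inter> v = {}"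
  shows "constant_paths U (Id_on A) t"
  unfolding constant_paths_def
proof
  fix u assume u: "u \<in> U"
  show "\<exists>c. \<forall>(\<alpha>, \<beta>)\<in>u. npaths (Id_on A) t \<alpha> \<beta> = c"
  proof (cases "u = t")
    case True
    then show ?thesis using u assms(2) by (intro exI[of _ 1]) (auto simp: npaths_Id_left)
  next
    case False
    then show ?thesis using u assms by (intro exI[of _ 0]) (auto simp: npaths_Id_left)
  qed
qed

lemma constant_paths_Id_right:
  assumes "s \<in> U" and "\<Union>U \<subseteq> A \<times> A" and "\<forall>u\<in>U. \<forall>v\<in>U. u \<noteq> v \<longrightarrow> u \<inter> v = {}"
  shows "constant_paths U s (Id_on A)"
  unfolding constant_paths_def
proof
  fix u assume u: "u \<in> U"
  show "\<exists>c. \<forall>(\<alpha>, \<beta>)\<in>u. npaths s (Id_on A) \<alpha> \<beta> = c"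
  proof (cases "u = s")
    case True
    then show ?thesis using u assms(2) by (intro exI[of _ 1]) (auto simp: npaths_Id_right)
  next
    case False
    then show ?thesis using u assms by (intro exI[of _ 0]) (auto simp: npaths_Id_right)
  qed
qed

lemma constant_paths_shift_left:
  assumes const: "constant_paths U s t"
    and s': "\<And>\<alpha> \<gamma>. (\<alpha>, \<gamma>) \<in> s' \<longleftrightarrow> (f \<alpha>, \<gamma>) \<in> s"
    and closed: "\<And>u. u \<in> U \<Longrightarrow> \<exists>u'\<in>U. \<forall>\<alpha> \<beta>. (\<alpha>, \<beta>) \<in> u \<longrightarrow> (f \<alpha>, \<beta>) \<in> u'"
  shows "constant_paths U s' t"
  unfolding constant_paths_def
proof
  fix u assume "u \<in> U"
  then obtain u' where "u' \<in> U" and u': "\<forall>\<alpha> \<beta>. (\<alpha>, \<beta>) \<in> u \<longrightarrow> (f \<alpha>, \<beta>) \<in> u'"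
    using closed by blast
  then obtain c where c: "\<forall>(\<alpha>, \<beta>)\<in>u'. npaths s t \<alpha> \<beta> = c"
    using const unfolding constant_paths_def by blast
  have shift: "npaths s' t \<alpha> \<beta> = npaths s t (f \<alpha>) \<beta>" for \<alpha> \<beta>
    unfolding npaths_def s' ..
  show "\<exists>c. \<forall>(\<alpha>, \<beta>)\<in>u. npaths s' t \<alpha> \<beta> = c"
  proof (intro exI[of _ c], clarify)
    fix \<alpha> \<beta> assume "(\<alpha>, \<beta>) \<in> u"
    then have "(f \<alpha>, \<beta>) \<in> u'"
      using u' by blast
    then show "npaths s' t \<alpha> \<beta> = c"
      using bspec[OF c] shift by fastforce
  qed
qed

lemma constant_paths_shift_right:
  assumes const: "constant_paths U s t"
    and t': "\<And>\<gamma> \<beta>. (\<gamma>, \<beta>) \<in> t' \<longleftrightarrow> (\<gamma>, f \<beta>) \<in> t"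
    and closed: "\<And>u. u \<in> U \<Longrightarrow> \<exists>u'\<in>U. \<forall>\<alpha> \<beta>. (\<alpha>, \<beta>) \<in> u \<longrightarrow> (\<alpha>, f \<beta>) \<in> u'"
  shows "constant_paths U s t'"
  unfolding constant_paths_def
proof
  fix u assume "u \<in> U"
  then obtain u' where "u' \<in> U" and u': "\<forall>\<alpha> \<beta>. (\<alpha>, \<beta>) \<in> u \<longrightarrow> (\<alpha>, f \<beta>) \<in> u'"
    using closed by blast
  then obtain c where c: "\<forall>(\<alpha>, \<beta>)\<in>u'. npaths s t \<alpha> \<beta> = c"
    using const unfolding constant_paths_def by blast
  have shift: "npaths s t' \<alpha> \<beta> = npaths s t \<alpha> (f \<beta>)" for \<alpha> \<beta>
    unfolding npaths_def t' ..
  show "\<exists>c. \<forall>(\<alpha>, \<beta>)\<in>u. npaths s t' \<alpha> \<beta> = c"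
  proof (intro exI[of _ c], clarify)
    fix \<alpha> \<beta> assume "(\<alpha>, \<beta>) \<in> u"
    then have "(\<alpha>, f \<beta>) \<in> u'"
      using u' by blast
    then show "npaths s t' \<alpha> \<beta> = c"
      using bspec[OF c] shift by fastforce
  qed
qed

context
  fixes X :: "'a set" and S :: "('a \<times> 'a) set set"
  assumes scheme: "assoc_scheme X S"
begin

lemma scheme_finite: "finite X"
  using scheme by (simp add: assoc_scheme_iff)

lemma scheme_nonempty: "X \<noteq> {}"
  using scheme by (simp add: assoc_scheme_iff)

lemma scheme_Id: "Id_on X \<in> S"
  using scheme by (simp add: assoc_scheme_iff)

lemma scheme_rel_nonempty: "s \<in> S \<Longrightarrow> s \<noteq> {}"
  using scheme by (simp add: assoc_scheme_iff)

lemma scheme_converse: "s \<in> S \<Longrightarrow> converse s \<in> S"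
  using scheme by (simp add: assoc_scheme_iff)

lemma scheme_constant_paths: "s \<in> S \<Longrightarrow> t \<in> S \<Longrightarrow> constant_paths S s t"
  using scheme by (simp add: assoc_scheme_iff)

lemma scheme_rel_dom: "s \<in> S \<Longrightarrow> (x, y) \<in> s \<Longrightarrow> x \<in> X \<and> y \<in> X"
  using scheme unfolding assoc_scheme_iff by blast

lemma scheme_cover: "x \<in> X \<Longrightarrow> y \<in> X \<Longrightarrow> \<exists>s\<in>S. (x, y) \<in> s"
  using scheme unfolding assoc_scheme_iff by blast

lemma scheme_rel_unique: "s \<in> S \<Longrightarrow> v \<in> S \<Longrightarrow> p \<in> s \<Longrightarrow> p \<in> v \<Longrightarrow> s = v"
  using scheme unfolding assoc_scheme_iff by blast

lemma scheme_irrefl: "s \<in> S \<Longrightarrow> s \<noteq> Id_on X \<Longrightarrow> (x, x) \<notin> s"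
  using scheme_rel_unique[OF _ scheme_Id, of s "(x, x)"] scheme_rel_dom[of s x x] by auto

text \<open>Every class has constant out- and in-valency: they are the intersection numbers
  of $s$ and $s^*$ (resp.\ $s^*$ and $s$) on the diagonal.\<close>
lemma scheme_valency_out: "s \<in> S \<Longrightarrow> \<exists>k. \<forall>x\<in>X. card {y. (x, y) \<in> s} = k"
proof -
  assume s: "s \<in> S"
  obtain c where c: "\<forall>(x, z)\<in>Id_on X. npaths s (converse s) x z = c"
    using scheme_constant_paths[OF s scheme_converse[OF s]] scheme_Id
    unfolding constant_paths_def by blast
  have "card {y. (x, y) \<in> s} = c" if "x \<in> X" for x
    using bspec[OF c Id_onI[OF that]] by (simp add: npaths_def)
  then show ?thesis by blast
qed

lemma scheme_valency_in: "s \<in> S \<Longrightarrow> \<exists>k. \<forall>z\<in>X. card {y. (y, z) \<in> s} = k"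
proof -
  assume s: "s \<in> S"
  obtain c where c: "\<forall>(x, z)\<in>Id_on X. npaths (converse s) s x z = c"
    using scheme_constant_paths[OF scheme_converse[OF s] s] scheme_Id
    unfolding constant_paths_def by blast
  have "card {y. (y, z) \<in> s} = c" if "z \<in> X" for z
    using bspec[OF c Id_onI[OF that]] by (simp add: npaths_def)
  then show ?thesis by blast
qed

end

lemma mem_Xt [simp]: "(x, a, b) \<in> Xt X \<longleftrightarrow> x \<in> X"
  by (auto simp: Xt_def)

lemma Xt_eq: "Xt X = X \<times> UNIV"
  by (auto simp: Xt_def)

lemma mem_Id_on_Xt [simp]:
  "((x, a, b), (y, c, d)) \<in> Id_on (Xt X) \<longleftrightarrow> x \<in> X \<and> y = x \<and> c = a \<and> d = b"
  by (auto simp: Id_on_def)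

lemma mem_t_rel [simp]: "((x, a, b), (y, c, d)) \<in> t_rel X \<longleftrightarrow> x \<in> X \<and> y = x \<and> c = a \<and> d \<noteq> b"
  by (auto simp: t_rel_def)

lemma mem_s_tilde [simp]: "((x, a, b), (y, c, d)) \<in> s_tilde s \<longleftrightarrow> (x, y) \<in> s \<and> c = a"
  by (auto simp: s_tilde_def)

lemma mem_r1 [simp]:
  "((x, a, b), (y, c, d)) \<in> r1 X H \<longleftrightarrow> x \<in> X \<and> y \<in> X \<and> a \<noteq> c \<and> HT H a x y = sgnpow (b + d)"
  by (auto simp: r1_def kdelta_def sgnpow_def)

lemma mem_rm1 [simp]:
  "((x, a, b), (y, c, d)) \<in> rm1 X H \<longleftrightarrow> x \<in> X \<and> y \<in> X \<and> a \<noteq> c \<and> HT H a x y \<noteq> sgnpow (b + d)"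
  by (auto simp: rm1_def)

lemma rel_eqI:
  "(\<And>x a b y c d. ((x, a, b), (y, c, d)) \<in> R \<longleftrightarrow> ((x, a, b), (y, c, d)) \<in> Q) \<Longrightarrow> R = Q"
  by (rule set_eqI) (metis prod_cases3 surj_pair)

lemma triple_set_eqI: "(\<And>x a b. (x, a, b) \<in> R \<longleftrightarrow> (x, a, b) \<in> Q) \<Longrightarrow> R = Q"
  by (rule set_eqI) (metis prod_cases3)

text \<open>Since $H^{T(a)}_{xy} = H^{T(c)}_{yx}$ for $a \neq c$, the relations $r^{\pm 1}_H$ are symmetric.\<close>
lemma HT_swap: "a \<noteq> c \<Longrightarrow> HT H c y x = HT H a x y"
  using bit_cases[of a] bit_cases[of c] by (auto simp: HT_def)

text \<open>Toggling the sign bit $b$ of $x_{ab}$; it interchanges $1$ with $t$ and $r^1_H$ with $r^{-1}_H$.\<close>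
definition toggle :: "'a \<times> bit \<times> bit \<Rightarrow> 'a \<times> bit \<times> bit" where
  "toggle = (\<lambda>(x, a, b). (x, a, b + 1))"

lemma toggle_simp [simp]: "toggle (x, a, b) = (x, a, b + 1)"
  by (simp add: toggle_def)

text \<open>The classes $1$, $r^1_H$ and $\widetilde s$ ($s \neq 1$); the remaining classes $t$ and
  $r^{-1}_H$ arise from $1$ and $r^1_H$ by toggling.\<close>
definition base_classes :: "'a set \<Rightarrow> ('a \<times> 'a) set set \<Rightarrow> ('a \<Rightarrow> 'a \<Rightarrow> real)
                   \<Rightarrow> (('a \<times> bit \<times> bit) \<times> ('a \<times> bit \<times> bit)) set set" where
  "base_classes X S H = {Id_on (Xt X), r1 X H} \<union> s_tilde ` (S - {Id_on X})"

lemma SH_base_classes: "SH X S H = base_classes X S H \<union> {t_rel X, rm1 X H}"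
  unfolding SH_def base_classes_def by auto

context
  fixes X :: "'a set" and S :: "('a \<times> 'a) set set" and H :: "'a \<Rightarrow> 'a \<Rightarrow> real"
  assumes scheme: "assoc_scheme X S" and hd: "hadamard X H"
begin

lemma HT_cases: "x \<in> X \<Longrightarrow> y \<in> X \<Longrightarrow> HT H a x y = 1 \<or> HT H a x y = -1"
  using hd by (simp add: hadamard_def HT_def)

text \<open>Off the diagonal blocks, $r^{-1}_H$ is $r^1_H$ with one sign bit toggled.\<close>
lemma HT_neq_sgnpow: "x \<in> X \<Longrightarrow> y \<in> X \<Longrightarrow> HT H a x y \<noteq> sgnpow b \<longleftrightarrow> HT H a x y = sgnpow (b + 1)"
  using HT_cases[of x y a] sgnpow_cases[of b] by auto

lemma SH_cases:
  assumes "u \<in> SH X S H"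
  obtains "u = Id_on (Xt X)" | "u = t_rel X" | w where "w \<in> S" "w \<noteq> Id_on X" "u = s_tilde w"
    | "u = r1 X H" | "u = rm1 X H"
  using assms unfolding SH_def by blast

lemma SH_dom: "u \<in> SH X S H \<Longrightarrow> ((x, a, b), (y, c, d)) \<in> u \<Longrightarrow> x \<in> X \<and> y \<in> X"
  by (erule SH_cases) (auto dest: scheme_rel_dom[OF scheme])

lemma SH_disjoint: "u \<in> SH X S H \<Longrightarrow> v \<in> SH X S H \<Longrightarrow> u \<noteq> v \<Longrightarrow> u \<inter> v = {}"
proof -
  assume u: "u \<in> SH X S H" and v: "v \<in> SH X S H" and "u \<noteq> v"
  have "u = v" if "((x, a, b), (y, c, d)) \<in> u" "((x, a, b), (y, c, d)) \<in> v" for x a b y c d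
    using u v that
    by (elim SH_cases) (auto dest: scheme_irrefl[OF scheme] scheme_rel_unique[OF scheme])
  then show "u \<inter> v = {}"
    using \<open>u \<noteq> v\<close> by (metis disjoint_iff prod_cases3 surj_pair)
qed

text \<open>For $r^{\pm 1}_H$ a witness is $(x_{00}, x_{1d})$ with $d$ chosen according to $H_{xx}$.\<close>
lemma SH_nonempty: "u \<in> SH X S H \<Longrightarrow> u \<noteq> {}"
proof -
  obtain x where x: "x \<in> X"
    using scheme_nonempty[OF scheme] by blast
  define d where "d = (if H x x = 1 then (0::bit) else 1)"
  have r1: "((x, 0, 0), (x, 1, d)) \<in> r1 X H" and rm1: "((x, 0, 0), (x, 1, d + 1)) \<in> rm1 X H"
    using x HT_cases[OF x x, of 0] by (auto simp: d_def HT_def sgnpow_def)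
  assume "u \<in> SH X S H"
  then show ?thesis
  proof (cases rule: SH_cases)
    case 1
    then have "((x, 0, 0), (x, 0, 0)) \<in> u"
      using x by (simp add: Id_on_def)
    then show ?thesis by blast
  next
    case 2
    then have "((x, 0, 0), (x, 0, 1)) \<in> u"
      using x by simp
    then show ?thesis by blast
  next
    case (3 w)
    then obtain y z where "(y, z) \<in> w"
      using scheme_rel_nonempty[OF scheme] by fastforce
    then have "((y, 0, 0), (z, 0, 0)) \<in> u"
      using 3 by simp
    then show ?thesis by blast
  qed (use r1 rm1 in blast)+
qed

text \<open>Every pair lies in a class: pairs in different layers $a \neq c$ lie in $r^{\pm 1}_H$,
  pairs in the same layer in $1$, $t$ or some $\widetilde s$.\<close>
lemma SH_union: "\<Union>(SH X S H) = Xt X \<times> Xt X"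
proof (rule rel_eqI)
  fix x a b y c d
  show "((x, a, b), (y, c, d)) \<in> \<Union>(SH X S H) \<longleftrightarrow> ((x, a, b), (y, c, d)) \<in> Xt X \<times> Xt X"
  proof
    assume "((x, a, b), (y, c, d)) \<in> \<Union>(SH X S H)"
    then show "((x, a, b), (y, c, d)) \<in> Xt X \<times> Xt X"
      using SH_dom by auto
  next
    assume "((x, a, b), (y, c, d)) \<in> Xt X \<times> Xt X"
    then have xy: "x \<in> X" "y \<in> X" by auto
    show "((x, a, b), (y, c, d)) \<in> \<Union>(SH X S H)"
    proof (cases "a = c")
      case False
      then show ?thesis
        using xy unfolding SH_def by (cases "HT H a x y = sgnpow (b + d)") auto
    next
      case True
      show ?thesis
      proof (cases "x = y")
        case True
        then show ?thesis
          using xy \<open>a = c\<close> unfolding SH_def by (cases "b = d") auto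
      next
        case False
        obtain w where w: "w \<in> S" "(x, y) \<in> w"
          using scheme_cover[OF scheme xy] by blast
        with False have "w \<noteq> Id_on X" by auto
        with w \<open>a = c\<close> show ?thesis
          unfolding SH_def by auto
      qed
    qed
  qed
qed

lemma SH_converse: "u \<in> SH X S H \<Longrightarrow> converse u \<in> SH X S H"
proof (erule SH_cases)
  assume "u = t_rel X"
  moreover have "converse (t_rel X) = t_rel X"
    by (rule rel_eqI) auto
  ultimately show ?thesis by (simp add: SH_def)
next
  fix w assume w: "w \<in> S" "w \<noteq> Id_on X" "u = s_tilde w"
  have "converse (s_tilde w) = s_tilde (converse w)"
    by (rule rel_eqI) auto
  moreover have "converse w \<noteq> Id_on X"
    using w by (metis converse_Id_on converse_converse)
  ultimately show ?thesis
    using w scheme_converse[OF scheme w(1)] by (simp add: SH_def)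
next
  assume "u = r1 X H"
  moreover have "converse (r1 X H) = r1 X H"
    by (rule rel_eqI) (auto simp: HT_swap add.commute)
  ultimately show ?thesis by (simp add: SH_def)
next
  assume "u = rm1 X H"
  moreover have "converse (rm1 X H) = rm1 X H"
    by (rule rel_eqI) (auto simp: HT_swap add.commute)
  ultimately show ?thesis by (simp add: SH_def)
qed (simp add: SH_def)

text \<open>Path counts between base classes. A path through $\widetilde s$ and $\widetilde t$ stays
  in the layer $a$ and the sign bit of its middle point is free.\<close>
lemma npaths_s_s:
  assumes "s \<in> S" "t \<in> S"
  shows "npaths (s_tilde s) (s_tilde t) (x, a, b) (z, c, f) = (if a = c then 2 * npaths s t x z else 0)"
proof -
  have eq: "{\<gamma>. ((x, a, b), \<gamma>) \<in> s_tilde s \<and> (\<gamma>, (z, c, f)) \<in> s_tilde t}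
      = (if a = c then {y. (x, y) \<in> s \<and> (y, z) \<in> t} \<times> ({a} \<times> UNIV) else {})"
    by (rule triple_set_eqI) auto
  have "finite {y. (x, y) \<in> s \<and> (y, z) \<in> t}"
    by (rule finite_subset[OF _ scheme_finite[OF scheme]]) (use scheme_rel_dom[OF scheme] assms in blast)
  then show ?thesis
    unfolding npaths_def eq by (simp add: card_cartesian_product card_bit)
qed

text \<open>A path $x_{ab} \to y_{ad} \to z_{cf}$ through $\widetilde s$ and $r^1_H$ needs $a \neq c$
  and $(x,y) \in s$; the sign bit $d$ is then forced, so the count is a valency of $s$.\<close>
lemma npaths_s_r:
  assumes "s \<in> S" "z \<in> X"
  shows "npaths (s_tilde s) (r1 X H) (x, a, b) (z, c, f) = (if a \<noteq> c then card {y. (x, y) \<in> s} else 0)"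
proof -
  define d where "d y = (if HT H a y z = sgnpow f then (0::bit) else 1)" for y
  have eq: "{\<gamma>. ((x, a, b), \<gamma>) \<in> s_tilde s \<and> (\<gamma>, (z, c, f)) \<in> r1 X H}
      = (if a \<noteq> c then (\<lambda>y. (y, a, d y)) ` {y. (x, y) \<in> s} else {})"
    using scheme_rel_dom[OF scheme assms(1)] sgnpow_solve[OF HT_cases] assms(2)
    by (intro triple_set_eqI) (auto simp: d_def)
  have "inj_on (\<lambda>y. (y, a, d y)) A" for A
    by (rule inj_onI) auto
  then show ?thesis
    unfolding npaths_def eq by (simp add: card_image)
qed

lemma npaths_r_s:
  assumes "s \<in> S" "x \<in> X"
  shows "npaths (r1 X H) (s_tilde s) (x, a, b) (z, c, f) = (if a \<noteq> c then card {y. (y, z) \<in> s} else 0)"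
proof -
  define d where "d y = (if HT H a x y = sgnpow b then (0::bit) else 1)" for y
  have eq: "{\<gamma>. ((x, a, b), \<gamma>) \<in> r1 X H \<and> (\<gamma>, (z, c, f)) \<in> s_tilde s}
      = (if a \<noteq> c then (\<lambda>y. (y, c, d y)) ` {y. (y, z) \<in> s} else {})"
  proof (rule triple_set_eqI)
    fix y e g
    show "(y, e, g) \<in> {\<gamma>. ((x, a, b), \<gamma>) \<in> r1 X H \<and> (\<gamma>, (z, c, f)) \<in> s_tilde s} \<longleftrightarrow>
        (y, e, g) \<in> (if a \<noteq> c then (\<lambda>y. (y, c, d y)) ` {y. (y, z) \<in> s} else {})"
      using scheme_rel_dom[OF scheme assms(1), of y z] sgnpow_solve[OF HT_cases[of x y a], of g b] assms(2)
      by (auto simp: d_def add.commute)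
  qed
  have "inj_on (\<lambda>y. (y, c, d y)) A" for A
    by (rule inj_onI) auto
  then show ?thesis
    unfolding npaths_def eq by (simp add: card_image)
qed

lemma npaths_r_r:
  assumes x: "x \<in> X" and z: "z \<in> X"
  shows "npaths (r1 X H) (r1 X H) (x, a, b) (z, c, f)
    = (if a = c then card {y\<in>X. HT H a x y * HT H a z y = sgnpow (b + f)} else 0)"
proof -
  define d where "d y = (if HT H a x y = sgnpow b then (0::bit) else 1)" for y
  have eq: "{\<gamma>. ((x, a, b), \<gamma>) \<in> r1 X H \<and> (\<gamma>, (z, c, f)) \<in> r1 X H}
      = (if a = c then (\<lambda>y. (y, a + 1, d y)) ` {y\<in>X. HT H a x y * HT H a z y = sgnpow (b + f)} else {})"
  proof (rule triple_set_eqI)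
    fix y e g
    show "(y, e, g) \<in> {\<gamma>. ((x, a, b), \<gamma>) \<in> r1 X H \<and> (\<gamma>, (z, c, f)) \<in> r1 X H} \<longleftrightarrow>
        (y, e, g) \<in> (if a = c then (\<lambda>y. (y, a + 1, d y)) ` {y\<in>X. HT H a x y * HT H a z y = sgnpow (b + f)} else {})"
    proof (cases "y \<in> X \<and> e \<noteq> a \<and> e \<noteq> c")
      case True
      then have "a = c"
        using bit_cases[of a] bit_cases[of c] bit_cases[of e] by auto
      moreover have "HT H e y z = HT H a z y"
        using True by (intro HT_swap) auto
      ultimately show ?thesis
        using True x z sgnpow_two_steps[OF HT_cases[of x y a] HT_cases[of z y a], of b g f]
        by (auto simp: d_def)
    next
      case False
      then show ?thesis
        using x z bit_cases[of a] bit_cases[of e] by auto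
    qed
  qed
  have inj: "inj_on (\<lambda>y. (y, k, d y)) A" for A k
    by (rule inj_onI) auto
  show ?thesis
    unfolding npaths_def eq by (simp add: card_image[OF inj])
qed

lemma constant_paths_s_s:
  assumes s: "s \<in> S" and t: "t \<in> S"
  shows "constant_paths (SH X S H) (s_tilde s) (s_tilde t)"
proof (rule constant_paths_tripleI)
  fix u assume "u \<in> SH X S H"
  obtain c0 where c0: "\<forall>(x, z)\<in>Id_on X. npaths s t x z = c0"
    using scheme_constant_paths[OF scheme s t] scheme_Id[OF scheme] unfolding constant_paths_def by blast
  from \<open>u \<in> SH X S H\<close>
  show "\<exists>k. \<forall>x a b z c f. ((x, a, b), (z, c, f)) \<in> u \<longrightarrow> npaths (s_tilde s) (s_tilde t) (x, a, b) (z, c, f) = k"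
  proof (cases rule: SH_cases)
    case 1
    then show ?thesis
      using c0 by (intro exI[of _ "2 * c0"]) (auto simp: npaths_s_s[OF s t])
  next
    case 2
    then show ?thesis
      using c0 by (intro exI[of _ "2 * c0"]) (auto simp: npaths_s_s[OF s t])
  next
    case (3 w)
    then obtain c1 where "\<forall>(x, z)\<in>w. npaths s t x z = c1"
      using scheme_constant_paths[OF scheme s t] unfolding constant_paths_def by blast
    then show ?thesis
      using 3 by (intro exI[of _ "2 * c1"]) (auto simp: npaths_s_s[OF s t])
  qed (auto simp: npaths_s_s[OF s t])
qed

text \<open>Paths mixing $\widetilde s$ and $r^1_H$ are counted by valencies of $s$.\<close>
lemma constant_paths_s_r:
  assumes s: "s \<in> S"
  shows "constant_paths (SH X S H) (s_tilde s) (r1 X H)"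
proof (rule constant_paths_tripleI)
  fix u assume u: "u \<in> SH X S H"
  obtain k where k: "\<forall>x\<in>X. card {y. (x, y) \<in> s} = k"
    using scheme_valency_out[OF scheme s] by blast
  have count: "npaths (s_tilde s) (r1 X H) (x, a, b) (z, c, f) = (if a \<noteq> c then k else 0)"
    if "((x, a, b), (z, c, f)) \<in> u" for x a b z c f
    using SH_dom[OF u that] npaths_s_r[OF s] k by auto
  from u show "\<exists>k. \<forall>x a b z c f. ((x, a, b), (z, c, f)) \<in> u \<longrightarrow> npaths (s_tilde s) (r1 X H) (x, a, b) (z, c, f) = k"
    by (cases rule: SH_cases) (use count in \<open>auto intro!: exI[of _ k] exI[of _ 0]\<close>)
qed

lemma constant_paths_r_s:
  assumes s: "s \<in> S"
  shows "constant_paths (SH X S H) (r1 X H) (s_tilde s)"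
proof (rule constant_paths_tripleI)
  fix u assume u: "u \<in> SH X S H"
  obtain k where k: "\<forall>z\<in>X. card {y. (y, z) \<in> s} = k"
    using scheme_valency_in[OF scheme s] by blast
  have count: "npaths (r1 X H) (s_tilde s) (x, a, b) (z, c, f) = (if a \<noteq> c then k else 0)"
    if "((x, a, b), (z, c, f)) \<in> u" for x a b z c f
    using SH_dom[OF u that] npaths_r_s[OF s] k by auto
  from u show "\<exists>k. \<forall>x a b z c f. ((x, a, b), (z, c, f)) \<in> u \<longrightarrow> npaths (r1 X H) (s_tilde s) (x, a, b) (z, c, f) = k"
    by (cases rule: SH_cases) (use count in \<open>auto intro!: exI[of _ k] exI[of _ 0]\<close>)
qed

text \<open>This is where the Hadamard property enters: inside a layer the count is $n$ on $1$,
  $0$ on $t$ and $n/2$ on every $\widetilde s$, since distinct rows agree in half the columns.\<close>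
lemma constant_paths_r_r: "constant_paths (SH X S H) (r1 X H) (r1 X H)"
proof (rule constant_paths_tripleI)
  fix u assume u: "u \<in> SH X S H"
  have hd_a: "hadamard X (HT H a)" for a
    using hadamard_HT[OF hd scheme_finite[OF scheme]] .
  have count: "npaths (r1 X H) (r1 X H) (x, a, b) (z, c, f)
      = (if a = c then card {y\<in>X. HT H a x y * HT H a z y = sgnpow (b + f)} else 0)"
    if "((x, a, b), (z, c, f)) \<in> u" for x a b z c f
    using SH_dom[OF u that] npaths_r_r by blast
  have diagonal: "{y\<in>X. HT H a x y * HT H a x y = e} = (if e = 1 then X else {})" if "x \<in> X" for x a e
    using hadamard_entry_sq[OF hd_a that] by auto
  from u show "\<exists>k. \<forall>x a b z c f. ((x, a, b), (z, c, f)) \<in> u \<longrightarrow> npaths (r1 X H) (r1 X H) (x, a, b) (z, c, f) = k"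
  proof (cases rule: SH_cases)
    case 1
    then show ?thesis
      using count by (intro exI[of _ "card X"]) (auto simp: diagonal)
  next
    case 2
    then show ?thesis
      using count by (intro exI[of _ 0]) (auto simp: diagonal bit_add_neq)
  next
    case (3 w)
    show ?thesis
    proof (intro exI[of _ "card X div 2"] allI impI)
      fix x a b z c f assume xz: "((x, a, b), (z, c, f)) \<in> u"
      then have "x \<noteq> z" "x \<in> X" "z \<in> X" "a = c"
        using 3 scheme_irrefl[OF scheme] scheme_rel_dom[OF scheme] by auto
      then show "npaths (r1 X H) (r1 X H) (x, a, b) (z, c, f) = card X div 2"
        using count[OF xz] hadamard_rows_balanced[OF hd_a scheme_finite[OF scheme] _ _ _ sgnpow_cases]
        by simp
    qed
  qed (use count in auto)
qed

lemma SH_toggle_left: "u \<in> SH X S H \<Longrightarrow> \<exists>u'\<in>SH X S H. \<forall>\<alpha> \<beta>. (\<alpha>, \<beta>) \<in> u \<longrightarrow> (toggle \<alpha>, \<beta>) \<in> u'"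
proof (erule SH_cases)
  assume "u = Id_on (Xt X)" then show ?thesis
    by (intro bexI[of _ "t_rel X"]) (auto simp: SH_def)
next
  assume "u = t_rel X" then show ?thesis
    by (intro bexI[of _ "Id_on (Xt X)"]) (auto simp: SH_def)
next
  fix w assume "w \<in> S" "w \<noteq> Id_on X" "u = s_tilde w" then show ?thesis
    by (intro bexI[of _ u]) (auto simp: SH_def)
next
  assume "u = r1 X H" then show ?thesis
    by (intro bexI[of _ "rm1 X H"]) (auto simp: SH_def)
next
  assume "u = rm1 X H" then show ?thesis
    by (intro bexI[of _ "r1 X H"]) (auto simp: SH_def HT_neq_sgnpow)
qed

lemma SH_toggle_right: "u \<in> SH X S H \<Longrightarrow> \<exists>u'\<in>SH X S H. \<forall>\<alpha> \<beta>. (\<alpha>, \<beta>) \<in> u \<longrightarrow> (\<alpha>, toggle \<beta>) \<in> u'"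
proof (erule SH_cases)
  assume "u = Id_on (Xt X)" then show ?thesis
    by (intro bexI[of _ "t_rel X"]) (auto simp: SH_def)
next
  assume "u = t_rel X" then show ?thesis
    by (intro bexI[of _ "Id_on (Xt X)"]) (auto simp: SH_def)
next
  fix w assume "w \<in> S" "w \<noteq> Id_on X" "u = s_tilde w" then show ?thesis
    by (intro bexI[of _ u]) (auto simp: SH_def)
next
  assume "u = r1 X H" then show ?thesis
    by (intro bexI[of _ "rm1 X H"]) (auto simp: SH_def)
next
  assume "u = rm1 X H" then show ?thesis
    by (intro bexI[of _ "r1 X H"]) (auto simp: SH_def HT_neq_sgnpow)
qed

lemma t_rel_toggle_left: "(\<alpha>, \<gamma>) \<in> t_rel X \<longleftrightarrow> (toggle \<alpha>, \<gamma>) \<in> Id_on (Xt X)"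
  by (cases \<alpha> rule: prod_cases3, cases \<gamma> rule: prod_cases3) auto

lemma t_rel_toggle_right: "(\<gamma>, \<beta>) \<in> t_rel X \<longleftrightarrow> (\<gamma>, toggle \<beta>) \<in> Id_on (Xt X)"
  by (cases \<beta> rule: prod_cases3, cases \<gamma> rule: prod_cases3) auto

lemma rm1_toggle_left: "(\<alpha>, \<gamma>) \<in> rm1 X H \<longleftrightarrow> (toggle \<alpha>, \<gamma>) \<in> r1 X H"
  by (cases \<alpha> rule: prod_cases3, cases \<gamma> rule: prod_cases3) (auto simp: HT_neq_sgnpow)

lemma rm1_toggle_right: "(\<gamma>, \<beta>) \<in> rm1 X H \<longleftrightarrow> (\<gamma>, toggle \<beta>) \<in> r1 X H"
  by (cases \<beta> rule: prod_cases3, cases \<gamma> rule: prod_cases3) (auto simp: HT_neq_sgnpow)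

lemma SH_partition: "\<Union>(SH X S H) \<subseteq> Xt X \<times> Xt X" "\<forall>u\<in>SH X S H. \<forall>v\<in>SH X S H. u \<noteq> v \<longrightarrow> u \<inter> v = {}"
  using SH_union SH_disjoint by auto

lemma constant_paths_base:
  assumes "s \<in> base_classes X S H" and "t \<in> base_classes X S H"
  shows "constant_paths (SH X S H) s t"
proof -
  have in_SH: "s \<in> SH X S H" "t \<in> SH X S H"
    using assms by (auto simp: SH_base_classes)
  consider "s = Id_on (Xt X)" | "t = Id_on (Xt X)"
    | "s = r1 X H \<or> (\<exists>w\<in>S. s = s_tilde w)" "t = r1 X H \<or> (\<exists>w\<in>S. t = s_tilde w)"
    using assms unfolding base_classes_def by blast
  then show ?thesis
  proof cases
    case 1
    then show ?thesis using constant_paths_Id_left[OF in_SH(2) SH_partition] by simp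
  next
    case 2
    then show ?thesis using constant_paths_Id_right[OF in_SH(1) SH_partition] by simp
  next
    case 3
    then show ?thesis
      by (auto intro: constant_paths_r_r constant_paths_r_s constant_paths_s_r constant_paths_s_s)
  qed
qed

text \<open>The classes $t$ and $r^{-1}_H$ are toggled copies of $1$ and $r^1_H$, so counts
  for them reduce to counts for base classes.\<close>
lemma constant_paths_base_left:
  assumes s: "s \<in> base_classes X S H" and t: "t \<in> SH X S H"
  shows "constant_paths (SH X S H) s t"
proof -
  have Id_r1: "Id_on (Xt X) \<in> base_classes X S H" "r1 X H \<in> base_classes X S H"
    by (auto simp: base_classes_def)
  from t consider "t \<in> base_classes X S H" | "t = t_rel X" | "t = rm1 X H"
    by (auto simp: SH_base_classes)
  then show ?thesis
  proof cases
    case 2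
    then show ?thesis
      using constant_paths_shift_right[OF constant_paths_base[OF s Id_r1(1)] t_rel_toggle_right SH_toggle_right]
      by simp
  next
    case 3
    then show ?thesis
      using constant_paths_shift_right[OF constant_paths_base[OF s Id_r1(2)] rm1_toggle_right SH_toggle_right]
      by simp
  qed (use constant_paths_base[OF s] in blast)
qed

lemma SH_constant_paths:
  assumes s: "s \<in> SH X S H" and t: "t \<in> SH X S H"
  shows "constant_paths (SH X S H) s t"
proof -
  have Id_r1: "Id_on (Xt X) \<in> base_classes X S H" "r1 X H \<in> base_classes X S H"
    by (auto simp: base_classes_def)
  from s consider "s \<in> base_classes X S H" | "s = t_rel X" | "s = rm1 X H"
    by (auto simp: SH_base_classes)
  then show ?thesis
  proof cases
    case 2
    then show ?thesis
      using constant_paths_shift_left[OF constant_paths_base_left[OF Id_r1(1) t] t_rel_toggle_left SH_toggle_left]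
      by simp
  next
    case 3
    then show ?thesis
      using constant_paths_shift_left[OF constant_paths_base_left[OF Id_r1(2) t] rm1_toggle_left SH_toggle_left]
      by simp
  qed (use constant_paths_base_left[OF _ t] in blast)
qed

end

theorem theorem1p1:
  fixes X :: "'a set" and S :: "('a \<times> 'a) set set" and H :: "'a \<Rightarrow> 'a \<Rightarrow> real"
  assumes "assoc_scheme X S"
    and "card X > 1"
    and "hadamard X H"
  shows "assoc_scheme (Xt X) (SH X S H)"
proof -
  have "finite (UNIV :: (bit \<times> bit) set)"
    by (metis UNIV_Times_UNIV UNIV_bit finite.emptyI finite_insert finite_cartesian_product)
  then have "finite (Xt X)"
    using scheme_finite[OF assms(1)] by (simp add: Xt_eq)
  moreover have "Xt X \<noteq> {}"
    using scheme_nonempty[OF assms(1)] by (simp add: Xt_eq)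
  moreover have "Id_on (Xt X) \<in> SH X S H"
    by (simp add: SH_def)
  ultimately show ?thesis
    unfolding assoc_scheme_iff
    using SH_nonempty[OF assms(1,3)] SH_disjoint[OF assms(1,3)] SH_union[OF assms(1,3)]
      SH_converse[OF assms(1,3)] SH_constant_paths[OF assms(1,3)]
    by (intro conjI ballI impI) auto
qed

end
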